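(* Let $(C,\mathfrak p,\mathfrak d)$ be a regular $q$-cycle coalgebra and let $s\ge1$ be an integer such that $(\mathfrak p_{10}^1)^r\ne1$ for all $0<r<s$. Then $\mathfrak p_{ij}^k=\mathfrak d_{ij}^k=0$ whenever $i,j\ne0$ and $i+j\le s$ (with $0\le i,j,k\le n-1$). Moreover, the formula $$\mathfrak d_{i0}^1\bigl(\mathfrak p_{10}^1-\mathfrak p_{i0}^i\bigr)=\sum_{h=1}^{i-1}\mathfrak p_{i0}^h\mathfrak d_{h0}^1-\sum_{h=2}^{i}\mathfrak d_{i0}^h\mathfrak p_{h0}^1$$ defines recursively $\mathfrak d_{i0}^1$ for $1<i\le s$ (with $i\le n-1$).
   Context: $K$ is an algebraically closed field of characteristic $0$ and $n\ge2$. $C$ is the coalgebra dual to $K[y]/\langle y^n\rangle$: basis $x_0,\dots,x_{n-1}$, $\Delta(x_i)=\sum_{j+k=i}x_j\otimes x_k$, $\epsilon(x_i)=\delta_{i0}$; $C\otimes C$ has the tensor product coalgebra structure; Sweedler notation $\Delta(b)=b_{(1)}\otimes b_{(2)}$. For linear maps $\mathfrak p,\mathfrak d\colon C\otimes C\to C$ write $a\cdot b=\mathfrak p(a\otimes b)$, $a:b=\mathfrak d(a\otimes b)$, $\mathfrak p(x_i\otimes x_j)=\sum_{k=0}^{n-1}\mathfrak p_{ij}^kx_k$, $\mathfrak d(x_i\otimes x_j)=\sum_{k=0}^{n-1}\mathfrak d_{ij}^kx_k$. A triple $(C,\mathfrak p,\mathfrak d)$ with $\mathfrak p,\mathfrak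 d$ coalgebra morphisms is a regular $q$-magma coalgebra if there are coalgebra morphisms $a\otimes b\mapsto a^b$, $a\otimes b\mapsto a_b$ from $C\otimes C$ to $C$ with $a^{b_{(1)}}\cdot b_{(2)}=(a\cdot b_{(1)})^{b_{(2)}}=\epsilon(b)a$ and $(a:b_{(2)})_{b_{(1)}}=a_{b_{(2)}}:b_{(1)}=\epsilon(b)a$. It is a regular $q$-cycle coalgebra if moreover for all $a,b,c$: (1) $(a\cdot b_{(1)})\cdot(c:b_{(2)})=(a\cdot c_{(2)})\cdot(b\cdot c_{(1)})$; (2) $(a\cdot b_{(1)}):(c\cdot b_{(2)})=(a:c_{(2)})\cdot(b:c_{(1)})$; (3) $(a:b_{(1)}):(c:b_{(2)})=(a:c_{(2)}):(b\cdot c_{(1)})$. *)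

theory Defs
  imports "HOL-Computational_Algebra.Polynomial"
begin

definition algebraically_closed :: "'a::field itself \<Rightarrow> bool" where
  "algebraically_closed _ \<longleftrightarrow> (\<forall>p::'a poly. degree p > 0 \<longrightarrow> (\<exists>x. poly p x = 0))"

(* Elements of C are coefficient vectors v :: nat => 'a w.r.t. the basis x_0..x_{n-1}
   (coefficients at indices >= n are 0).  x_i is bvec i. *)
definition bvec :: "nat \<Rightarrow> nat \<Rightarrow> 'a::field" where
  "bvec i = (\<lambda>k. if k = i then 1 else 0)"

(* A linear map f : C (x) C -> C is given by its structure constants f i j k
   (f(x_i (x) x_j) = sum_k f i j k x_k).  bil n f u v = f(u (x) v). *)
definition bil :: "nat \<Rightarrow> (nat \<Rightarrow> nat \<Rightarrow> nat \<Rightarrow> 'a::field) \<Rightarrow> (nat \<Rightarrow> 'a) \<Rightarrow> (nat \<Rightarrow> 'a) \<Rightarrow> (nat \<Rightarrow> 'a)" where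
  "bil n f u v = (\<lambda>k. if k < n then (\<Sum>i<n. \<Sum>j<n. u i * v j * f i j k) else 0)"

(* Comultiplication of C: Delta(x_m) = sum_{a+b=m} x_a (x) x_b;
   comult n v a b is the coefficient of x_a (x) x_b in Delta(v). *)
definition comult :: "nat \<Rightarrow> (nat \<Rightarrow> 'a::field) \<Rightarrow> nat \<Rightarrow> nat \<Rightarrow> 'a" where
  "comult n v a b = (if a + b < n then v (a + b) else 0)"

definition counit :: "(nat \<Rightarrow> 'a::field) \<Rightarrow> 'a" where
  "counit v = v 0"

(* f : C (x) C -> C is a coalgebra morphism (C (x) C with the tensor product coalgebra
   structure): Delta o f = (f (x) f) o Delta_{C(x)C} and epsilon o f = epsilon (x) epsilon,
   checked on the basis x_i (x) x_j. *)
definition coalg_morph :: "nat \<Rightarrow> (nat \<Rightarrow> nat \<Rightarrow> nat \<Rightarrow> 'a::field) \<Rightarrow> bool" where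
  "coalg_morph n f \<longleftrightarrow>
     (\<forall>i<n. \<forall>j<n.
        (\<forall>a<n. \<forall>b<n. comult n (bil n f (bvec i) (bvec j)) a b =
            (\<Sum>i1\<le>i. \<Sum>j1\<le>j. bil n f (bvec i1) (bvec j1) a
                                   * bil n f (bvec (i - i1)) (bvec (j - j1)) b))
      \<and> counit (bil n f (bvec i) (bvec j)) = (if i = 0 \<and> j = 0 then 1 else 0))"

(* Regular q-magma coalgebra (C, P, D): a.b = P(a(x)b), a:b = D(a(x)b),
   a^b = L(a(x)b), a_b = R(a(x)b); identities checked on basis elements
   a = x_i, b = x_j, with Delta(x_j) = sum_{j1 <= j} x_{j1} (x) x_{j-j1}. *)
definition regular_q_magma :: "nat \<Rightarrow> (nat \<Rightarrow> nat \<Rightarrow> nat \<Rightarrow> 'a::field) \<Rightarrow> (nat \<Rightarrow> nat \<Rightarrow> nat \<Rightarrow> 'a) \<Rightarrow> bool" where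
  "regular_q_magma n P D \<longleftrightarrow> coalg_morph n P \<and> coalg_morph n D \<and>
    (\<exists>L R. coalg_morph n L \<and> coalg_morph n R \<and>
      (\<forall>i<n. \<forall>j<n. \<forall>k.
         (\<Sum>j1\<le>j. bil n P (bil n L (bvec i) (bvec j1)) (bvec (j - j1)) k)
            = (if j = 0 then bvec i k else 0)
       \<and> (\<Sum>j1\<le>j. bil n L (bil n P (bvec i) (bvec j1)) (bvec (j - j1)) k)
            = (if j = 0 then bvec i k else 0)
       \<and> (\<Sum>j1\<le>j. bil n R (bil n D (bvec i) (bvec (j - j1))) (bvec j1) k)
            = (if j = 0 then bvec i k else 0)
       \<and> (\<Sum>j1\<le>j. bil n D (bil n R (bvec i) (bvec (j - j1))) (bvec j1) k)
            = (if j = 0 then bvec i k else 0)))"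

(* Regular q-cycle coalgebra: identities (1)-(3), on a = x_i, b = x_j, c = x_l. *)
definition regular_q_cycle :: "nat \<Rightarrow> (nat \<Rightarrow> nat \<Rightarrow> nat \<Rightarrow> 'a::field) \<Rightarrow> (nat \<Rightarrow> nat \<Rightarrow> nat \<Rightarrow> 'a) \<Rightarrow> bool" where
  "regular_q_cycle n P D \<longleftrightarrow> regular_q_magma n P D \<and>
    (\<forall>i<n. \<forall>j<n. \<forall>l<n. \<forall>k.
       (\<Sum>j1\<le>j. bil n P (bil n P (bvec i) (bvec j1)) (bil n D (bvec l) (bvec (j - j1))) k)
         = (\<Sum>l1\<le>l. bil n P (bil n P (bvec i) (bvec (l - l1))) (bil n P (bvec j) (bvec l1)) k)
     \<and> (\<Sum>j1\<le>j. bil n D (bil n P (bvec i) (bvec j1)) (bil n P (bvec l) (bvec (j - j1))) k)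
         = (\<Sum>l1\<le>l. bil n P (bil n D (bvec i) (bvec (l - l1))) (bil n D (bvec j) (bvec l1)) k)
     \<and> (\<Sum>j1\<le>j. bil n D (bil n D (bvec i) (bvec j1)) (bil n D (bvec l) (bvec (j - j1))) k)
         = (\<Sum>l1\<le>l. bil n D (bil n D (bvec i) (bvec (l - l1))) (bil n P (bvec j) (bvec l1)) k))"

end

theory Submission
  imports Defs
begin

(* For a coalgebra morphism F : C (x) C -> C write q for the x_1-coefficient of F(x_1 (x) x_0).
   F raises no degree (F(x_i (x) x_j) involves only x_k with k <= i + j), and comultiplicativity
   ties its coefficients to its x_1-coefficients: F(x_k (x) x_0) has leading coefficient q^k, and
   F(x_k (x) x_1) has x_(k+1)-coefficient (k+1) q^k p, where p is the x_1-coefficient of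
   F(x_0 (x) x_1). At k = n - 1 truncation makes n q^(n-1) p vanish, so p = 0 in characteristic 0
   once q is a unit. Regularity makes q a unit for both P and D. With q now that of P, reading the
   cycle identities (1) and (2) with c = x_0 at x_1 then gives, by induction on m = i + j, the
   equations P_ij^1 q = q^m P_ij^1 and D_ij^1 q = q^m D_ij^1 for j > 0, so these coefficients
   vanish while q^m <> q, i.e. for m <= s; comultiplicativity spreads this to all coefficients
   with i + j <= s. The recursion for D_i0^1 is identity (2) with b = c = x_0, read at x_1. *)

lemma sum_eq_single:
  assumes "finite S" "x \<in> S" "\<And>y. y \<in> S \<Longrightarrow> y \<noteq> x \<Longrightarrow> f y = 0"
  shows "sum f S = (f x :: 'a::comm_monoid_add)"
  using sum.mono_neutral_right[of S "{x}" f] assms by auto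

lemma bil_bvec_bvec:
  assumes "i < n" "j < n"
  shows "bil n F (bvec i) (bvec j) = (\<lambda>k. if k < n then F i j k else (0::'a::field))"
proof -
  have delta: "bvec i a * bvec j b * x = (if b = j then if a = i then x else 0 else 0)"
    for a b and x :: 'a
    by (simp add: bvec_def)
  show ?thesis
    using assms by (intro ext) (simp add: bil_def delta)
qed

lemma bil_bil_bvec:
  assumes "i < n" "j < n" "l < n" "k < n"
  shows "bil n E (bil n F (bvec i) (bvec j)) (bvec l) k = (\<Sum>a<n. F i j a * (E a l k :: 'a::field))"
proof -
  have delta: "x * bvec l b * y = (if b = l then x * y else 0)" for b and x y :: 'a
    by (simp add: bvec_def)
  show ?thesis
    using assms by (simp add: bil_bvec_bvec) (simp add: bil_def delta cong: if_cong)
qed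

definition comp_coeff ::
  "nat \<Rightarrow> (nat \<Rightarrow> nat \<Rightarrow> nat \<Rightarrow> 'a::field) \<Rightarrow> (nat \<Rightarrow> nat \<Rightarrow> nat \<Rightarrow> 'a) \<Rightarrow>
   (nat \<Rightarrow> nat \<Rightarrow> nat \<Rightarrow> 'a) \<Rightarrow> nat \<Rightarrow> nat \<Rightarrow> nat \<Rightarrow> nat \<Rightarrow> nat \<Rightarrow> 'a" where
  "comp_coeff n E F G i j l j' k = (\<Sum>a<n. \<Sum>b<n. F i j a * G l j' b * E a b k)"

lemma bil_bil_bil_bvec:
  assumes "i < n" "j < n" "l < n" "j' < n" "k < n"
  shows "bil n E (bil n F (bvec i) (bvec j)) (bil n G (bvec l) (bvec j')) k
       = comp_coeff n E F G i j l j' k"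
  using assms by (simp add: bil_bvec_bvec) (simp add: bil_def comp_coeff_def cong: if_cong)

definition coeff1_vanishes_below :: "nat \<Rightarrow> (nat \<Rightarrow> nat \<Rightarrow> nat \<Rightarrow> 'a::zero) \<Rightarrow> nat \<Rightarrow> bool" where
  "coeff1_vanishes_below n F m \<longleftrightarrow> (\<forall>a<n. \<forall>b<n. 0 < b \<longrightarrow> a + b < m \<longrightarrow> F a b 1 = 0)"

lemma coeff1_vanishes_below_Suc:
  "coeff1_vanishes_below n F (Suc m) \<longleftrightarrow>
     coeff1_vanishes_below n F m \<and> (\<forall>a<n. \<forall>b<n. 0 < b \<longrightarrow> a + b = m \<longrightarrow> F a b 1 = 0)"
  unfolding coeff1_vanishes_below_def by (auto simp: less_Suc_eq)

context
  fixes n :: nat and F :: "nat \<Rightarrow> nat \<Rightarrow> nat \<Rightarrow> 'a::field"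
  assumes morph: "coalg_morph n F"
begin

lemma coalg_morph_counit:
  assumes "i < n" "j < n"
  shows "F i j 0 = (if i = 0 \<and> j = 0 then 1 else 0)"
  using morph assms by (auto simp: coalg_morph_def counit_def bil_bvec_bvec)

lemma coalg_morph_comult_sum:
  assumes "i < n" "j < n" "a < n" "b < n"
  shows "(\<Sum>i1\<le>i. \<Sum>j1\<le>j. F i1 j1 a * F (i - i1) (j - j1) b)
       = (if a + b < n then F i j (a + b) else 0)"
proof -
  have "comult n (bil n F (bvec i) (bvec j)) a b =
          (\<Sum>i1\<le>i. \<Sum>j1\<le>j. bil n F (bvec i1) (bvec j1) a
                              * bil n F (bvec (i - i1)) (bvec (j - j1)) b)"
    using morph assms unfolding coalg_morph_def by blast
  then show ?thesis
    using assms by (auto simp: comult_def bil_bvec_bvec intro!: sum.cong)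
qed

lemma coalg_morph_comult:
  assumes "i < n" "j < n" "a + b < n"
  shows "F i j (a + b) = (\<Sum>i1\<le>i. \<Sum>j1\<le>j. F i1 j1 a * F (i - i1) (j - j1) b)"
  using coalg_morph_comult_sum[of i j a b] assms by simp

lemma coalg_morph_unit:
  assumes "k < n"
  shows "F 0 0 k = (if k = 0 then 1 else 0)"
proof (cases "k = 0")
  case True
  then show ?thesis using coalg_morph_counit assms by simp
next
  case False
  have pow: "F 0 0 k = F 0 0 1 ^ k" if "k < n" for k
    using that
  proof (induction k)
    case 0
    then show ?case using coalg_morph_counit by simp
  next
    case (Suc k)
    then show ?case using coalg_morph_comult[of 0 0 k 1] by simp
  qed
  have "F 0 0 1 * F 0 0 (n - 1) = 0"
    using coalg_morph_comult_sum[of 0 0 1 "n - 1"] False assms by simp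
  then have "F 0 0 1 = 0"
    using pow[of "n - 1"] assms by auto
  then show ?thesis
    using pow[of k] False assms by simp
qed

lemma coalg_morph_vanish_above_degree:
  "k < n \<Longrightarrow> i < n \<Longrightarrow> j < n \<Longrightarrow> i + j < k \<Longrightarrow> F i j k = 0"
proof (induction k arbitrary: i j)
  case 0
  then show ?case by simp
next
  case (Suc k)
  have "F i j (k + 1) = (\<Sum>i1\<le>i. \<Sum>j1\<le>j. F i1 j1 k * F (i - i1) (j - j1) 1)"
    using coalg_morph_comult[of i j k 1] Suc.prems by simp
  also have "\<dots> = 0"
  proof (intro sum.neutral ballI)
    fix i1 j1
    assume "i1 \<in> {..i}" "j1 \<in> {..j}"
    then show "F i1 j1 k * F (i - i1) (j - j1) 1 = 0"
      using Suc.IH[of i1 j1] coalg_morph_unit[of 1] Suc.prems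
      by (cases "i1 + j1 < k") (auto simp: not_less)
  qed
  finally show ?case by simp
qed

lemma coalg_morph_diag_power:
  "k < n \<Longrightarrow> F k 0 k = F 1 0 1 ^ k"
proof (induction k)
  case 0
  then show ?case using coalg_morph_counit by simp
next
  case (Suc k)
  have "F (Suc k) 0 (k + 1) = (\<Sum>i1\<le>Suc k. F i1 0 k * F (Suc k - i1) 0 1)"
    using coalg_morph_comult[of "Suc k" 0 k 1] Suc.prems by simp
  also have "\<dots> = F k 0 k * F 1 0 1"
  proof (subst sum_eq_single[of _ k])
    fix i1
    assume "i1 \<in> {..Suc k}" "i1 \<noteq> k"
    then show "F i1 0 k * F (Suc k - i1) 0 1 = 0"
      using coalg_morph_vanish_above_degree[of k i1 0] coalg_morph_unit[of 1] Suc.prems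
      by (cases "i1 < k") (auto simp: Suc_diff_le)
  qed (auto simp: Suc_diff_le)
  finally show ?case using Suc by simp
qed

lemma coalg_morph_vanish_of_coeff1:
  assumes vanish: "coeff1_vanishes_below n F m"
  shows "k < n \<Longrightarrow> i < n \<Longrightarrow> j < n \<Longrightarrow> 0 < j \<Longrightarrow> i + j + 1 < m + k \<Longrightarrow> F i j k = 0"
proof (induction k arbitrary: i j)
  case 0
  then show ?case using coalg_morph_counit by simp
next
  case (Suc k)
  show ?case
  proof (cases "k = 0")
    case True
    then show ?thesis using vanish Suc.prems by (simp add: coeff1_vanishes_below_def)
  next
    case False
    have "F i j (k + 1) = (\<Sum>i1\<le>i. \<Sum>j1\<le>j. F i1 j1 k * F (i - i1) (j - j1) 1)"
      using coalg_morph_comult[of i j k 1] Suc.prems by simp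
    also have "\<dots> = 0"
    proof (intro sum.neutral ballI)
      fix i1 j1
      assume "i1 \<in> {..i}" "j1 \<in> {..j}"
      then have i1: "i1 \<le> i" and j1: "j1 \<le> j" by auto
      consider "0 < j1" "i1 + j1 + 1 < m + k" | "i1 = i" "j1 = j" | "j1 = 0" "i - i1 + j < m"
        | "j1 = 0" "i1 < k"
        using Suc.prems i1 j1 by linarith
      then show "F i1 j1 k * F (i - i1) (j - j1) 1 = 0"
        using Suc.IH[of i1 j1] coalg_morph_unit[of 1] vanish
          coalg_morph_vanish_above_degree[of k i1 0] Suc.prems i1 j1
        by cases (auto simp: coeff1_vanishes_below_def)
    qed
    finally show ?thesis by simp
  qed
qed

lemma coalg_morph_sum_left:
  assumes "0 < i" "i < n"
  shows "(\<Sum>a<n. F i 0 a * g a) = (\<Sum>a=1..i. F i 0 a * g a)"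
proof (rule sum.mono_neutral_right)
  show "\<forall>a\<in>{..<n} - {1..i}. F i 0 a * g a = 0"
    using coalg_morph_counit[of i 0] coalg_morph_vanish_above_degree[of _ i 0] assms
    by (auto simp: not_le)
qed (use assms in auto)

end

lemma comp_coeff_unit_right:
  assumes "coalg_morph n G"
  shows "comp_coeff n E F G i j 0 0 k = (\<Sum>a<n. F i j a * (E a 0 k :: 'a::field))"
proof -
  have "F i j a * G 0 0 b * E a b k = (if b = 0 then F i j a * E a 0 k else 0)" if "b < n" for a b
    using coalg_morph_unit[OF assms that] by simp
  then show ?thesis
    unfolding comp_coeff_def by (intro sum.cong) auto
qed

lemma coalg_morph_coeff_011_eq_0:
  fixes F :: "nat \<Rightarrow> nat \<Rightarrow> nat \<Rightarrow> 'a::field_char_0"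
  assumes morph: "coalg_morph n F" and n: "2 \<le> n" and q: "F 1 0 1 \<noteq> 0"
  shows "F 0 1 1 = 0"
proof -
  define T where "T k = (\<Sum>i1\<le>k. \<Sum>j1\<le>1. F i1 j1 k * F (k - i1) (1 - j1) 1)" for k
  have T_comult: "T k = (if k + 1 < n then F k 1 (k + 1) else 0)" if "k < n" for k
    using coalg_morph_comult_sum[OF morph, of k 1 k 1] that n by (simp add: T_def)
  have T_closed: "T k = of_nat (k + 1) * F 1 0 1 ^ k * F 0 1 1" if "k < n" for k
    using that
  proof (induction k)
    case 0
    then show ?case
      using coalg_morph_unit[OF morph, of 0] coalg_morph_unit[OF morph, of 1]
        coalg_morph_counit[OF morph, of 0 1] n
      by (simp add: T_def atMost_Suc)
  next
    case (Suc k)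
    define g where
      "g i1 = F i1 0 (Suc k) * F (Suc k - i1) 1 1 + F i1 1 (Suc k) * F (Suc k - i1) 0 1" for i1
    have low: "g i1 = 0" if "i1 < k" for i1
      using coalg_morph_vanish_above_degree[OF morph, of "Suc k" i1] that Suc.prems
      by (simp add: g_def)
    have "T (Suc k) = (\<Sum>i1<k. g i1) + g k + g (Suc k)"
      by (simp add: T_def g_def atMost_Suc lessThan_Suc_atMost[symmetric] algebra_simps)
    also have "(\<Sum>i1<k. g i1) = 0"
      using low by simp
    also have "g k = T k * F 1 0 1"
      using coalg_morph_vanish_above_degree[OF morph, of "Suc k" k 0] T_comult[of k] Suc.prems
      by (simp add: g_def)
    also have "g (Suc k) = F 1 0 1 ^ Suc k * F 0 1 1"
      using coalg_morph_diag_power[OF morph, of "Suc k"] coalg_morph_unit[OF morph, of 1] Suc.prems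
      by (simp add: g_def)
    finally show ?case
      using Suc by (simp add: algebra_simps)
  qed
  have "of_nat n * F 1 0 1 ^ (n - 1) * F 0 1 1 = 0"
    using T_comult[of "n - 1"] T_closed[of "n - 1"] n by simp
  then show ?thesis
    using q n by simp
qed

lemma comp_coeff_coeff1_leading:
  assumes morphF: "coalg_morph n F" and morphG: "coalg_morph n G"
    and vanish: "coeff1_vanishes_below n H m"
    and il: "i < n" "l < n" "0 < l" "i + l = m"
  shows "comp_coeff n H F G i 0 l 0 1 = F i 0 i * G l 0 l * (H i l 1 :: 'a::field)"
proof -
  have inner: "(\<Sum>b<n. F i 0 a * G l 0 b * H a b 1) = F i 0 a * G l 0 l * H a l 1"
    if "a < n" for a
  proof (rule sum_eq_single)
    fix b
    assume b: "b \<in> {..<n}" "b \<noteq> l"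
    consider "i < a" | "l < b" | "b = 0" | "0 < b" "a + b < m"
      using b il by linarith
    then show "F i 0 a * G l 0 b * H a b 1 = 0"
      using coalg_morph_vanish_above_degree[OF morphF, of a i 0]
        coalg_morph_vanish_above_degree[OF morphG, of b l 0]
        coalg_morph_counit[OF morphG, of l 0] vanish that il b
      by cases (auto simp: coeff1_vanishes_below_def)
  qed (use il in auto)
  have "comp_coeff n H F G i 0 l 0 1 = (\<Sum>a<n. F i 0 a * G l 0 l * H a l 1)"
    using inner by (simp add: comp_coeff_def)
  also have "\<dots> = F i 0 i * G l 0 l * H i l 1"
  proof (rule sum_eq_single)
    fix a
    assume "a \<in> {..<n}" "a \<noteq> i"
    then show "F i 0 a * G l 0 l * H a l 1 = 0"
      using coalg_morph_vanish_above_degree[OF morphF, of a i 0] vanish il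
      by (cases "a < i") (auto simp: coeff1_vanishes_below_def)
  qed (use il in auto)
  finally show ?thesis .
qed

lemma sum_comp_coeff_coeff1:
  assumes morphF: "coalg_morph n F" and morphG: "coalg_morph n G"
    and vanishF: "coeff1_vanishes_below n F m" and vanishG: "coeff1_vanishes_below n G m"
    and E: "E 0 1 1 = 0" and ij: "i < n" "j < n" "0 < j" "i + j = m"
  shows "(\<Sum>j1\<le>j. comp_coeff n E F G i j1 0 (j - j1) 1) = F i j 1 * (E 1 0 1 :: 'a::field)"
proof -
  have "comp_coeff n E F G i j1 0 (j - j1) 1 = 0" if "j1 < j" for j1
    unfolding comp_coeff_def
  proof (intro sum.neutral ballI)
    fix a b
    assume ab: "a \<in> {..<n}" "b \<in> {..<n}"
    show "F i j1 a * G 0 (j - j1) b * E a b 1 = 0"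
    proof (cases "b = 0 \<or> j - j1 + 1 < m + b")
      case True
      then show ?thesis
        using coalg_morph_counit[OF morphG, of 0 "j - j1"]
          coalg_morph_vanish_of_coeff1[OF morphG vanishG, of b 0 "j - j1"] ab ij that
        by auto
    next
      case False
      then have "i = 0" "j1 = 0" "b = 1" using ij that by auto
      then show ?thesis
        using coalg_morph_unit[OF morphF, of a] E ab by auto
    qed
  qed
  then have "(\<Sum>j1\<le>j. comp_coeff n E F G i j1 0 (j - j1) 1) = comp_coeff n E F G i j 0 0 1"
    by (subst sum_eq_single[of _ j]) auto
  also have "\<dots> = (\<Sum>a<n. F i j a * E a 0 1)"
    by (rule comp_coeff_unit_right[OF morphG])
  also have "\<dots> = F i j 1 * E 1 0 1"
  proof (rule sum_eq_single)
    fix a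
    assume "a \<in> {..<n}" "a \<noteq> 1"
    then show "F i j a * E a 0 1 = 0"
      using coalg_morph_counit[OF morphF, of i j]
        coalg_morph_vanish_of_coeff1[OF morphF vanishF, of a i j] ij
      by (cases "a = 0") auto
  qed (use ij in auto)
  finally show ?thesis .
qed

lemma regular_q_magma_coalg_morph:
  assumes "regular_q_magma n P D"
  shows "coalg_morph n P" "coalg_morph n D"
  using assms by (simp_all add: regular_q_magma_def)

lemma regular_q_magma_linear_coeffs_nonzero:
  assumes magma: "regular_q_magma n P D" and n: "2 \<le> n"
  shows "P 1 0 1 \<noteq> 0" "D 1 0 1 \<noteq> (0::'a::field)"
proof -
  obtain L R where morphL: "coalg_morph n L" and inverse:
      "\<forall>i<n. \<forall>j<n. \<forall>k.
         (\<Sum>j1\<le>j. bil n P (bil n L (bvec i) (bvec j1)) (bvec (j - j1)) k)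
            = (if j = 0 then bvec i k else 0)
       \<and> (\<Sum>j1\<le>j. bil n R (bil n D (bvec i) (bvec (j - j1))) (bvec j1) k)
            = (if j = 0 then bvec i k else 0)"
    using magma unfolding regular_q_magma_def by blast
  have "bil n P (bil n L (bvec 1) (bvec 0)) (bvec 0) 1 = 1"
    and "bil n R (bil n D (bvec 1) (bvec 0)) (bvec 0) 1 = 1"
    using inverse[rule_format, of 1 0 1] n by (simp_all add: bvec_def)
  then have "L 1 0 1 * P 1 0 1 = 1" and "D 1 0 1 * R 1 0 1 = 1"
    using n by (simp_all add: bil_bil_bvec coalg_morph_sum_left[OF morphL]
        coalg_morph_sum_left[OF regular_q_magma_coalg_morph(2)[OF magma]])
  then show "P 1 0 1 \<noteq> 0" "D 1 0 1 \<noteq> 0"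
    by auto
qed

lemma regular_q_cycle_magma: "regular_q_cycle n P D \<Longrightarrow> regular_q_magma n P D"
  by (simp add: regular_q_cycle_def)

lemma regular_q_cycle_identity1:
  assumes "regular_q_cycle n P D" "i < n" "j < n" "l < n" "k < n"
  shows "(\<Sum>j1\<le>j. comp_coeff n P P D i j1 l (j - j1) k)
       = (\<Sum>l1\<le>l. comp_coeff n P P P i (l - l1) j l1 k)"
proof -
  have "(\<Sum>j1\<le>j. bil n P (bil n P (bvec i) (bvec j1)) (bil n D (bvec l) (bvec (j - j1))) k)
      = (\<Sum>l1\<le>l. bil n P (bil n P (bvec i) (bvec (l - l1))) (bil n P (bvec j) (bvec l1)) k)"
    using assms unfolding regular_q_cycle_def by blast
  moreover have "(\<Sum>j1\<le>j. bil n P (bil n P (bvec i) (bvec j1)) (bil n D (bvec l) (bvec (j - j1))) k)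
      = (\<Sum>j1\<le>j. comp_coeff n P P D i j1 l (j - j1) k)"
    using assms by (intro sum.cong refl) (simp add: bil_bil_bil_bvec)
  moreover have "(\<Sum>l1\<le>l. bil n P (bil n P (bvec i) (bvec (l - l1))) (bil n P (bvec j) (bvec l1)) k)
      = (\<Sum>l1\<le>l. comp_coeff n P P P i (l - l1) j l1 k)"
    using assms by (intro sum.cong refl) (simp add: bil_bil_bil_bvec)
  ultimately show ?thesis by simp
qed

lemma regular_q_cycle_identity2:
  assumes "regular_q_cycle n P D" "i < n" "j < n" "l < n" "k < n"
  shows "(\<Sum>j1\<le>j. comp_coeff n D P P i j1 l (j - j1) k)
       = (\<Sum>l1\<le>l. comp_coeff n P D D i (l - l1) j l1 k)"
proof -
  have "(\<Sum>j1\<le>j. bil n D (bil n P (bvec i) (bvec j1)) (bil n P (bvec l) (bvec (j - j1))) k)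
      = (\<Sum>l1\<le>l. bil n P (bil n D (bvec i) (bvec (l - l1))) (bil n D (bvec j) (bvec l1)) k)"
    using assms unfolding regular_q_cycle_def by blast
  moreover have "(\<Sum>j1\<le>j. bil n D (bil n P (bvec i) (bvec j1)) (bil n P (bvec l) (bvec (j - j1))) k)
      = (\<Sum>j1\<le>j. comp_coeff n D P P i j1 l (j - j1) k)"
    using assms by (intro sum.cong refl) (simp add: bil_bil_bil_bvec)
  moreover have "(\<Sum>l1\<le>l. bil n P (bil n D (bvec i) (bvec (l - l1))) (bil n D (bvec j) (bvec l1)) k)
      = (\<Sum>l1\<le>l. comp_coeff n P D D i (l - l1) j l1 k)"
    using assms by (intro sum.cong refl) (simp add: bil_bil_bil_bvec)
  ultimately show ?thesis by simp
qed

lemma regular_q_cycle_coeff1_next: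
  assumes cyc: "regular_q_cycle n P D"
    and vanishP: "coeff1_vanishes_below n P m" and vanishD: "coeff1_vanishes_below n D m"
    and m: "2 \<le> m" and q: "P 1 0 1 ^ m \<noteq> P 1 0 1"
    and ij: "i < n" "j < n" "0 < j" "i + j = m"
  shows "P i j 1 = 0 \<and> D i j (1::nat) = (0::'a::field)"
proof -
  have morphP: "coalg_morph n P" and morphD: "coalg_morph n D"
    using regular_q_magma_coalg_morph[OF regular_q_cycle_magma[OF cyc]] by auto
  have P011: "P 0 1 1 = 0"
    using vanishP m ij by (simp add: coeff1_vanishes_below_def)
  have diag: "P i 0 i * P j 0 j = P 1 0 1 ^ m"
    using coalg_morph_diag_power[OF morphP, of i] coalg_morph_diag_power[OF morphP, of j] ij
    by (simp flip: power_add)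
  have "P i j 1 * P 1 0 1 = (\<Sum>j1\<le>j. comp_coeff n P P D i j1 0 (j - j1) 1)"
    using sum_comp_coeff_coeff1[where E = P, OF morphP morphD vanishP vanishD P011 ij] ..
  also have "\<dots> = comp_coeff n P P P i 0 j 0 1"
    using regular_q_cycle_identity1[OF cyc, of i j 0 1] ij by simp
  also have "\<dots> = P 1 0 1 ^ m * P i j 1"
    using comp_coeff_coeff1_leading[OF morphP morphP vanishP ij] diag by simp
  finally have P_eq: "P i j 1 * P 1 0 1 = P 1 0 1 ^ m * P i j 1" .
  have "D i j 1 * P 1 0 1 = (\<Sum>j1\<le>j. comp_coeff n P D D i j1 0 (j - j1) 1)"
    using sum_comp_coeff_coeff1[where E = P, OF morphD morphD vanishD vanishD P011 ij] ..
  also have "\<dots> = (\<Sum>l1\<le>j. comp_coeff n P D D i (j - l1) 0 l1 1)"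
    by (subst sum.atLeastAtMost_rev[of _ 0 j, unfolded atLeast0AtMost]) (auto intro: sum.cong)
  also have "\<dots> = comp_coeff n D P P i 0 j 0 1"
    using regular_q_cycle_identity2[OF cyc, of i 0 j 1] ij by simp
  also have "\<dots> = P 1 0 1 ^ m * D i j 1"
    using comp_coeff_coeff1_leading[OF morphP morphP vanishD ij] diag by simp
  finally have D_eq: "D i j 1 * P 1 0 1 = P 1 0 1 ^ m * D i j 1" .
  show ?thesis
    using P_eq D_eq q by (simp add: mult.commute)
qed

lemma regular_q_cycle_coeff1_vanishes_below:
  fixes P D :: "nat \<Rightarrow> nat \<Rightarrow> nat \<Rightarrow> 'a::field_char_0"
  assumes cyc: "regular_q_cycle n P D"
    and q: "\<forall>m. 2 \<le> m \<and> m \<le> s \<longrightarrow> P 1 0 1 ^ m \<noteq> P 1 0 1"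
  shows "coeff1_vanishes_below n P (Suc s) \<and> coeff1_vanishes_below n D (Suc s)"
  using q
proof (induction s)
  case 0
  then show ?case by (simp add: coeff1_vanishes_below_def)
next
  case (Suc s)
  have vanish: "coeff1_vanishes_below n P (Suc s)" "coeff1_vanishes_below n D (Suc s)"
    using Suc.IH Suc.prems le_SucI by blast+
  have "P a b 1 = 0 \<and> D a b 1 = 0" if ab: "a < n" "b < n" "0 < b" "a + b = Suc s" for a b
  proof (cases "s = 0")
    case True
    then have "a = 0" "b = 1" and n: "2 \<le> n" using ab by auto
    have magma: "regular_q_magma n P D"
      using cyc by (rule regular_q_cycle_magma)
    note morph = regular_q_magma_coalg_morph[OF magma]
      and nonzero = regular_q_magma_linear_coeffs_nonzero[OF magma n]
    show ?thesis
      using coalg_morph_coeff_011_eq_0[OF morph(1) n nonzero(1)]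
        coalg_morph_coeff_011_eq_0[OF morph(2) n nonzero(2)] \<open>a = 0\<close> \<open>b = 1\<close>
      by simp
  next
    case False
    then have m: "2 \<le> Suc s" by simp
    show ?thesis
      using regular_q_cycle_coeff1_next[OF cyc vanish m _ ab] Suc.prems m by blast
  qed
  then show ?case
    using vanish by (simp add: coeff1_vanishes_below_Suc)
qed

lemma regular_q_cycle_D_linear_recursion:
  assumes cyc: "regular_q_cycle n P D" and i: "0 < i" "i < n"
  shows "D i 0 1 * (P 1 0 1 - P i 0 i)
       = (\<Sum>h=1..i-1. P i 0 h * D h 0 1) - (\<Sum>h=2..i. D i 0 h * (P h 0 1 :: 'a::field))"
proof -
  have morphP: "coalg_morph n P" and morphD: "coalg_morph n D"
    using regular_q_magma_coalg_morph[OF regular_q_cycle_magma[OF cyc]] by auto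
  have "(\<Sum>h=1..i. P i 0 h * D h 0 1) = comp_coeff n D P P i 0 0 0 1"
    using comp_coeff_unit_right[OF morphP] coalg_morph_sum_left[OF morphP] i by simp
  also have "\<dots> = comp_coeff n P D D i 0 0 0 1"
    using regular_q_cycle_identity2[OF cyc, of i 0 0 1] i by simp
  also have "\<dots> = (\<Sum>h=1..i. D i 0 h * P h 0 1)"
    using comp_coeff_unit_right[OF morphD] coalg_morph_sum_left[OF morphD] i by simp
  finally have sums: "(\<Sum>h=1..i. P i 0 h * D h 0 1) = (\<Sum>h=1..i. D i 0 h * P h 0 1)" .
  obtain i' where i': "i = Suc i'" using i by (cases i) auto
  have "(\<Sum>h=1..i. P i 0 h * D h 0 1) = (\<Sum>h=1..i-1. P i 0 h * D h 0 1) + P i 0 i * D i 0 1"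
    using i' by (simp add: sum.cl_ivl_Suc)
  moreover have "(\<Sum>h=1..i. D i 0 h * P h 0 1) = D i 0 1 * P 1 0 1 + (\<Sum>h=2..i. D i 0 h * P h 0 1)"
    using i by (subst sum.atLeast_Suc_atMost) (simp_all add: numeral_2_eq_2)
  ultimately have "(\<Sum>h=1..i-1. P i 0 h * D h 0 1) + P i 0 i * D i 0 1
              = D i 0 1 * P 1 0 1 + (\<Sum>h=2..i. D i 0 h * P h 0 1)"
    using sums by simp
  then show ?thesis
    by (simp add: algebra_simps)
qed

theorem theorem6p1:
  fixes P D :: "nat \<Rightarrow> nat \<Rightarrow> nat \<Rightarrow> 'a::field_char_0" and n s :: nat
  assumes "algebraically_closed TYPE('a)"
    and "n \<ge> 2"
    and "regular_q_cycle n P D"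
    and "s \<ge> 1"
    and "\<forall>r. 0 < r \<and> r < s \<longrightarrow> (P 1 0 1) ^ r \<noteq> 1"
  shows "(\<forall>i j k. 0 < i \<and> 0 < j \<and> i < n \<and> j < n \<and> k < n \<and> i + j \<le> s
              \<longrightarrow> P i j k = 0 \<and> D i j k = 0)
       \<and> (\<forall>i. 1 < i \<and> i \<le> s \<and> i < n \<longrightarrow>
              P 1 0 1 - P i 0 i \<noteq> 0
            \<and> D i 0 1 * (P 1 0 1 - P i 0 i)
                = (\<Sum>h=1..i-1. P i 0 h * D h 0 1) - (\<Sum>h=2..i. D i 0 h * P h 0 1))"
proof -
  have magma: "regular_q_magma n P D"
    using assms(3) by (rule regular_q_cycle_magma)
  note morph = regular_q_magma_coalg_morph[OF magma]
  have "P 1 0 1 \<noteq> 0"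
    using regular_q_magma_linear_coeffs_nonzero[OF magma assms(2)] by simp
  then have powers: "P 1 0 1 ^ m \<noteq> P 1 0 1" if "2 \<le> m" "m \<le> s" for m
    using assms(5) that by (cases m) auto
  then have "coeff1_vanishes_below n P (Suc s)" "coeff1_vanishes_below n D (Suc s)"
    using regular_q_cycle_coeff1_vanishes_below[OF assms(3)] by blast+
  then have "P i j k = 0 \<and> D i j k = 0"
    if "0 < i" "0 < j" "i < n" "j < n" "k < n" "i + j \<le> s" for i j k
    using coalg_morph_vanish_of_coeff1[OF morph(1)] coalg_morph_vanish_of_coeff1[OF morph(2)]
      coalg_morph_counit[OF morph(1), of i j] coalg_morph_counit[OF morph(2), of i j] that
    by (cases k) auto
  moreover have "P 1 0 1 - P i 0 i \<noteq> 0" if "1 < i" "i \<le> s" "i < n" for i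
    using coalg_morph_diag_power[OF morph(1), of i] powers[of i] that by simp
  ultimately show ?thesis
    using regular_q_cycle_D_linear_recursion[OF assms(3)] by auto
qed

end
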